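(* Let $Q=\triangle ABC$ be a triangle with angle $\pi/n$ at $A$ and angle $m\pi/n$ at $B$, where $n$ is even and $m$ is a positive integer with $m<n-1$. Then there is no billiard trajectory in $Q$ starting at $A$ and returning to $A$.
   Context: A billiard trajectory in a polygon is a path of straight segments inside the polygon reflecting off the interiors of edges with angle of incidence equal to angle of reflection; here it emanates from the vertex $A$, and a trajectory returning to $A$ means one whose endpoint is $A$ (trajectories stop when they hit a vertex). *)

theory Defs
  imports "HOL-Analysis.Analysis"
begin

definition vertex_angle :: "complex \<Rightarrow> complex \<Rightarrow> complex \<Rightarrow> real" where
  "vertex_angle P Q R = arccos (((P - Q) \<bullet> (R - Q)) / (norm (P - Q) * norm (R - Q)))"

definition reflect_dir :: "complex \<Rightarrow> complex \<Rightarrow> complex" where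
  "reflect_dir u z = (u / of_real (norm u))\<^sup>2 * cnj z"

definition on_edge_interior :: "complex \<Rightarrow> complex \<Rightarrow> complex \<Rightarrow> complex \<Rightarrow> complex \<Rightarrow> bool" where
  "on_edge_interior A B C p u \<longleftrightarrow>
     (p \<in> open_segment A B \<and> u = B - A) \<or>
     (p \<in> open_segment B C \<and> u = C - B) \<or>
     (p \<in> open_segment C A \<and> u = A - C)"

definition billiard_return_A :: "complex \<Rightarrow> complex \<Rightarrow> complex \<Rightarrow> nat \<Rightarrow> (nat \<Rightarrow> complex) \<Rightarrow> bool" where
  "billiard_return_A A B C k p \<longleftrightarrow>
     k \<ge> 1 \<and> p 0 = A \<and> p k = A \<and>
     (\<forall>i<k. p i \<noteq> p (Suc i) \<and>
            open_segment (p i) (p (Suc i)) \<subseteq> interior (convex hull {A, B, C})) \<and>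
     (\<forall>i. 0 < i \<and> i < k \<longrightarrow>
        (\<exists>u. on_edge_interior A B C (p i) u \<and>
             (p (Suc i) - p i) / of_real (norm (p (Suc i) - p i)) =
               reflect_dir u ((p i - p (i - 1)) / of_real (norm (p i - p (i - 1))))))"

end

theory Submission
  imports Defs
begin

text \<open>
  Let e be the unit direction of AB. Since the angles at A and B are multiples of pi/n, the
  squared unit directions of all three edges have the same n-th power as e^2. Reflection in an
  edge of direction u sends a unit direction d to u^2 * cnj d, so the quantity (d * cnj e)^n
  is conjugated at every bounce. The first segment leaves A strictly inside the angle at A, and
  so does the reversed last segment, whose quantity is the same because n is even. On that
  sector of opening pi/n the quantity determines the direction and has imaginary part of fixed
  sign. Hence an odd number of bounces is impossible, while an even number forces the last
  segment to be the reverse of the first; billiard motion being deterministic, the trajectory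
  then retraces itself, p i = p (k - i), which for odd k makes the middle segment degenerate.
\<close>

lemma reflect_dir_sgn: "reflect_dir u z = (sgn u)\<^sup>2 * cnj z"
  by (simp add: reflect_dir_def sgn_eq)

lemma sgn_cnj: "sgn (cnj z) = cnj (sgn z)"
  by (simp add: sgn_eq)

lemma unit_mult_cnj_self: "norm (a::complex) = 1 \<Longrightarrow> a * cnj a = 1"
  by (metis complex_norm_square of_real_1 power_one)

lemma scaleR_norm_sgn: "norm x *\<^sub>R sgn x = (x :: 'a :: real_normed_vector)"
  by (cases "x = 0") (simp_all add: sgn_div_norm)

lemma cis_power_square_eq_1:
  assumes "real n * x = of_int j * pi"
  shows "((cis x) ^ n)\<^sup>2 = 1"
proof -
  have "((cis x) ^ n)\<^sup>2 = cis (2 * (real n * x))" by (simp only: Complex.DeMoivre of_nat_numeral)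
  also have "\<dots> = cis (2 * pi * of_int j)" using assms by (simp add: mult_ac)
  also have "\<dots> = 1" by (simp only: cis_multiple_2pi Ints_of_int)
  finally show ?thesis .
qed

lemma cis_power_in_sector:
  fixes s \<theta> \<phi> :: real
  assumes s: "s = 1 \<or> s = -1" and "0 < \<theta>" "\<theta> < pi / n" "0 < \<phi>" "\<phi> < pi / n"
  shows "cis (s * \<theta>) ^ n = cis (s * \<phi>) ^ n \<Longrightarrow> \<theta> = \<phi>"
    and "cis (s * \<theta>) ^ n \<noteq> cnj (cis (s * \<phi>) ^ n)"
proof -
  have "n > 0" using assms(2,3) by (cases n) auto
  hence bounds: "0 < n * \<theta>" "n * \<theta> < pi" "0 < n * \<phi>" "n * \<phi> < pi"
    using assms(2-5) by (simp_all add: field_simps)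
  have cis_pow: "cis (s * t) ^ n = cis (s * (n * t))" for t :: real
    by (simp add: Complex.DeMoivre mult_ac)
  have Re_pow: "Re (cis (s * t) ^ n) = cos (n * t)"
    and Im_pow: "Im (cis (s * t) ^ n) = s * sin (n * t)" for t :: real
  proof -
    have "cos (s * x) = cos x" "sin (s * x) = s * sin x" for x using s by auto
    thus "Re (cis (s * t) ^ n) = cos (n * t)" "Im (cis (s * t) ^ n) = s * sin (n * t)"
      by (simp_all only: cis_pow cis.sel)
  qed
  show "\<theta> = \<phi>" if "cis (s * \<theta>) ^ n = cis (s * \<phi>) ^ n"
  proof -
    have "Re (cis (s * \<theta>) ^ n) = Re (cis (s * \<phi>) ^ n)" using that by simp
    hence "cos (n * \<theta>) = cos (n * \<phi>)" unfolding Re_pow .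
    hence "n * \<theta> = n * \<phi>" by (rule cos_inj_pi[rotated 4]) (use bounds in auto)
    thus ?thesis using \<open>n > 0\<close> by simp
  qed
  show "cis (s * \<theta>) ^ n \<noteq> cnj (cis (s * \<phi>) ^ n)"
  proof
    assume "cis (s * \<theta>) ^ n = cnj (cis (s * \<phi>) ^ n)"
    hence "Im (cis (s * \<theta>) ^ n) = - Im (cis (s * \<phi>) ^ n)" by (simp del: complex_cnj_power)
    hence "s * sin (n * \<theta>) = - (s * sin (n * \<phi>))" unfolding Im_pow .
    moreover have "sin (n * \<theta>) > 0" "sin (n * \<phi>) > 0" using bounds by (auto intro: sin_gt_zero)
    ultimately show False using s by (elim disjE) auto
  qed
qed

lemma Arg_positive_combination:
  fixes \<alpha> \<beta> c :: real
  assumes "0 < \<alpha>" "0 < \<beta>" "0 < c" "c < pi"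
  shows "0 < Arg (of_real \<alpha> + of_real \<beta> * cis c) \<and> Arg (of_real \<alpha> + of_real \<beta> * cis c) < c"
proof -
  define z where "z = of_real \<alpha> + of_real \<beta> * cis c"
  have "sin c > 0" using assms(3,4) by (rule sin_gt_zero)
  hence "Im z > 0" using assms(2) by (simp add: z_def)
  hence Arg: "0 < Arg z" "Arg z < pi" using Arg_lt_pi by blast+
  have "z \<noteq> 0" using \<open>Im z > 0\<close> by auto
  hence "cis (Arg z - c) = sgn z * cis (- c)" by (simp flip: cis_Arg add: cis_mult)
  hence "sin (Arg z - c) = Im (z * cis (- c)) / norm z"
    by (metis cis.sel(2) Im_divide_of_real sgn_eq mult.commute times_divide_eq_right)
  also have "Im (z * cis (- c)) = - (\<alpha> * sin c)" by (simp add: z_def algebra_simps)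
  finally have "sin (Arg z - c) < 0"
    using \<open>sin c > 0\<close> assms(1) \<open>z \<noteq> 0\<close> by (simp add: divide_less_0_iff)
  thus ?thesis using sin_ge_zero[of "Arg z - c"] Arg assms(3) unfolding z_def by linarith
qed

lemma sgn_positive_combination_in_sector:
  fixes e f :: complex and s c \<alpha> \<beta> :: real
  assumes e: "norm e = 1" and f: "f * cnj e = cis (s * c)" and s: "s = 1 \<or> s = -1"
    and pos: "0 < \<alpha>" "0 < \<beta>" and c: "0 < c" "c < pi"
  shows "\<exists>\<theta>. 0 < \<theta> \<and> \<theta> < c \<and> sgn (of_real \<alpha> * e + of_real \<beta> * f) * cnj e = cis (s * \<theta>)"
proof -
  define z where "z = of_real \<alpha> + of_real \<beta> * cis c"
  have Arg: "0 < Arg z" "Arg z < c" using Arg_positive_combination[OF pos c] unfolding z_def by auto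
  hence "z \<noteq> 0" by (metis Arg_zero less_irrefl)
  have "sgn e = e" using e by (simp add: sgn_eq)
  hence "sgn (of_real \<alpha> * e + of_real \<beta> * f) * cnj e = sgn ((of_real \<alpha> * e + of_real \<beta> * f) * cnj e)"
    by (simp only: sgn_mult sgn_cnj)
  also have "(of_real \<alpha> * e + of_real \<beta> * f) * cnj e = of_real \<alpha> * (e * cnj e) + of_real \<beta> * (f * cnj e)"
    by (simp only: distrib_right mult.assoc)
  also have "\<dots> = of_real \<alpha> + of_real \<beta> * cis (s * c)" using unit_mult_cnj_self[OF e] f by simp
  also have "sgn \<dots> = cis (s * Arg z)"
    using s
  proof
    assume "s = 1" thus ?thesis using \<open>z \<noteq> 0\<close> by (simp add: z_def cis_Arg)
  next
    assume "s = -1"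
    hence "of_real \<alpha> + of_real \<beta> * cis (s * c) = cnj z" by (simp add: z_def cis_cnj)
    thus ?thesis using \<open>s = -1\<close> \<open>z \<noteq> 0\<close> by (simp add: sgn_cnj cis_cnj flip: cis_Arg)
  qed
  finally show ?thesis using Arg by blast
qed

lemma reflect_dir_involutive: "u \<noteq> 0 \<Longrightarrow> reflect_dir u (reflect_dir u z) = z"
  using unit_mult_cnj_self[of "(sgn u)\<^sup>2"]
  by (simp add: reflect_dir_sgn norm_power norm_sgn mult.assoc flip: complex_cnj_power)

lemma reflect_dir_uminus: "reflect_dir u (- z) = - reflect_dir u z"
  by (simp add: reflect_dir_def)

lemma reflect_dir_twisted_power:
  fixes e u z :: complex
  assumes "norm e = 1" "((sgn u)\<^sup>2) ^ n = (e\<^sup>2) ^ n"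
  shows "(reflect_dir u z * cnj e) ^ n = cnj ((z * cnj e) ^ n)"
proof -
  have "(reflect_dir u z * cnj e) ^ n = ((sgn u)\<^sup>2) ^ n * (cnj z) ^ n * (cnj e) ^ n"
    by (simp add: reflect_dir_sgn power_mult_distrib)
  also have "\<dots> = (cnj z) ^ n * (e * (e * cnj e)) ^ n"
    using assms(2) by (simp add: power_mult_distrib power2_eq_square)
  also have "\<dots> = cnj ((z * cnj e) ^ n)"
    using unit_mult_cnj_self[OF assms(1)] by (simp add: power_mult_distrib)
  finally show ?thesis .
qed

lemma vertex_angle_cis:
  fixes P Q R :: complex
  assumes "P \<noteq> Q" "R \<noteq> Q"
  shows "sgn (R - Q) * cnj (sgn (P - Q)) \<in> {cis (vertex_angle P Q R), cis (- vertex_angle P Q R)}"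
proof -
  define z where "z = sgn (R - Q) * cnj (sgn (P - Q))"
  define \<gamma> where "\<gamma> = vertex_angle P Q R"
  have np: "norm (P - Q) > 0" "norm (R - Q) > 0" using assms by auto
  have Re_z: "Re z = ((P - Q) \<bullet> (R - Q)) / (norm (P - Q) * norm (R - Q))"
    unfolding z_def inner_complex_def using np by (simp add: field_simps)
  have "\<bar>(P - Q) \<bullet> (R - Q)\<bar> \<le> norm (P - Q) * norm (R - Q)" by (rule Cauchy_Schwarz_ineq2)
  hence "-1 \<le> Re z \<and> Re z \<le> 1" unfolding Re_z using np by (simp add: abs_le_iff divide_le_eq_1 le_divide_eq)
  hence Re: "Re z = cos \<gamma>"
    unfolding \<gamma>_def vertex_angle_def Re_z[symmetric] by simp
  have "norm z = 1" using assms by (simp add: z_def norm_mult norm_sgn)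
  hence "(Re z)\<^sup>2 + (Im z)\<^sup>2 = 1" by (simp add: cmod_def)
  hence "(Im z)\<^sup>2 = (sin \<gamma>)\<^sup>2" using Re sin_squared_eq[of \<gamma>] by simp
  hence "Im z = sin \<gamma> \<or> Im z = - sin \<gamma>" by (metis power2_eq_iff)
  hence "z = cis \<gamma> \<or> z = cis (- \<gamma>)" using Re by (auto simp: complex_eq_iff)
  thus ?thesis unfolding z_def \<gamma>_def by simp
qed

lemma sgn_sq_power_eq_if_vertex_angle_multiple:
  fixes P Q R :: complex and n :: nat and j :: int
  assumes "P \<noteq> Q" "R \<noteq> Q" "n > 0" "vertex_angle P Q R = of_int j * pi / real n"
  shows "((sgn (R - Q))\<^sup>2) ^ n = ((sgn (P - Q))\<^sup>2) ^ n"
proof -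
  define z where "z = sgn (R - Q) * cnj (sgn (P - Q))"
  have "real n * (of_int j * pi / real n) = of_int j * pi"
    and "real n * - (of_int j * pi / real n) = of_int (- j) * pi" using assms(3) by simp_all
  moreover have "z = cis (of_int j * pi / real n) \<or> z = cis (- (of_int j * pi / real n))"
    using vertex_angle_cis[OF assms(1,2)] unfolding z_def assms(4) by simp
  ultimately have z: "(z ^ n)\<^sup>2 = 1" using cis_power_square_eq_1 by metis
  have "sgn (R - Q) = z * sgn (P - Q)"
    using assms(1) unit_mult_cnj_self[of "sgn (P - Q)"]
    by (simp add: z_def norm_sgn mult.assoc mult.commute[of "cnj _"])
  hence "((sgn (R - Q))\<^sup>2) ^ n = (z\<^sup>2) ^ n * ((sgn (P - Q))\<^sup>2) ^ n"
    by (simp only: power_mult_distrib)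
  also have "(z\<^sup>2) ^ n = (z ^ n)\<^sup>2" by (simp add: mult.commute flip: power_mult)
  finally show ?thesis using z by simp
qed

lemma in_open_segment_if_same_direction:
  fixes x y y' :: "'a :: real_normed_vector"
  assumes "y \<noteq> x" "sgn (y - x) = sgn (y' - x)" "norm (y - x) < norm (y' - x)"
  shows "y \<in> open_segment x y'"
proof -
  define t where "t = norm (y - x) / norm (y' - x)"
  have "0 < norm (y - x)" "0 < norm (y' - x)" using assms(1,3) by auto
  hence t: "0 < t" "t < 1" using assms(3) by (simp_all add: t_def field_simps)
  have "y - x = norm (y - x) *\<^sub>R sgn (y' - x)" using assms(2) scaleR_norm_sgn by metis
  hence "y - x = t *\<^sub>R (y' - x)" by (simp add: t_def sgn_div_norm divide_inverse)
  hence "y = (1 - t) *\<^sub>R x + t *\<^sub>R y'" by (simp add: algebra_simps)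
  thus ?thesis using t assms(1) by (auto simp: in_segment(2))
qed

lemma ray_exit_unique:
  fixes x y1 y2 :: "'a :: real_normed_vector"
  assumes "y1 \<noteq> x" "y2 \<noteq> x" "sgn (y1 - x) = sgn (y2 - x)"
    and "open_segment x y1 \<subseteq> S" "open_segment x y2 \<subseteq> S" "y1 \<notin> S" "y2 \<notin> S"
  shows "y1 = y2"
proof (cases "norm (y1 - x)" "norm (y2 - x)" rule: linorder_cases)
  case less
  thus ?thesis using in_open_segment_if_same_direction[of y1 x y2] assms by auto
next
  case equal
  hence "y1 - x = y2 - x" using assms(3) scaleR_norm_sgn by metis
  thus ?thesis by simp
next
  case greater
  thus ?thesis using in_open_segment_if_same_direction[of y2 x y1] assms by auto
qed

lemma not_collinear_imp_distinct:
  fixes A B C :: "'a :: real_vector"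
  assumes "\<not> collinear {A, B, C}"
  shows "A \<noteq> B" "B \<noteq> C" "C \<noteq> A"
  using assms by (auto simp: insert_commute)

lemma closed_segment_disjoint_interior_triangle:
  fixes P Q R :: complex
  assumes nc: "\<not> collinear {P, Q, R}" and x: "x \<in> closed_segment P Q"
  shows "x \<notin> interior (convex hull {P, Q, R})"
proof
  assume "x \<in> interior (convex hull {P, Q, R})"
  then obtain a b c where abc: "0 < c" "a + b + c = 1" "a *\<^sub>R P + b *\<^sub>R Q + c *\<^sub>R R = x"
    using interior_convex_hull_3_minimal[OF nc] by auto
  obtain u where u: "x = (1 - u) *\<^sub>R P + u *\<^sub>R Q" using x in_segment(1) by blast
  have cR: "c *\<^sub>R R = (1 - u - a) *\<^sub>R P + (u - b) *\<^sub>R Q"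
    using abc(3) unfolding u by (simp add: algebra_simps)
  have "R = inverse c *\<^sub>R (c *\<^sub>R R)" using abc(1) by simp
  also have "\<dots> = ((1 - u - a) / c) *\<^sub>R P + ((u - b) / c) *\<^sub>R Q"
    unfolding cR by (simp add: scaleR_add_right divide_inverse mult.commute)
  finally have "R = ((1 - u - a) / c) *\<^sub>R P + ((u - b) / c) *\<^sub>R Q" .
  moreover have "(1 - u - a) / c + (u - b) / c = 1"
    using abc(1,2) by (simp flip: add_divide_distrib)
  ultimately have "R \<in> affine hull {P, Q}" unfolding affine_hull_2 by blast
  thus False using nc affine_hull_3_imp_collinear by blast
qed

lemma ray_into_triangle_interior:
  fixes A B C x :: complex
  assumes nc: "\<not> collinear {A, B, C}" and "x \<noteq> A"
    and "open_segment A x \<subseteq> interior (convex hull {A, B, C})"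
  shows "\<exists>v w. 0 < v \<and> 0 < w \<and> x - A = of_real v * (B - A) + of_real w * (C - A)"
proof -
  have "midpoint A x \<in> interior (convex hull {A, B, C})" using assms(2,3) by auto
  then obtain a b c where abc: "0 < a" "0 < b" "0 < c" "a + b + c = 1"
      "a *\<^sub>R A + b *\<^sub>R B + c *\<^sub>R C = midpoint A x"
    using interior_convex_hull_3_minimal[OF nc] by auto
  have a: "a = 1 - b - c" using abc(4) by simp
  have "x - A = 2 * (midpoint A x - A)" by (simp add: midpoint_def scaleR_conv_of_real field_simps)
  also have "\<dots> = of_real (2 * b) * (B - A) + of_real (2 * c) * (C - A)"
    unfolding abc(5)[symmetric] a by (simp add: scaleR_conv_of_real algebra_simps)
  finally show ?thesis using abc(2,3) by (intro exI[of _ "2 * b"] exI[of _ "2 * c"]) simp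
qed

lemma open_segments_meet_imp_collinear:
  fixes P Q R x :: complex
  assumes "x \<in> open_segment P Q" "x \<in> open_segment Q R"
  shows "collinear {P, Q, R}"
proof -
  have "collinear {P, Q, x}"
    using assms(1) by (intro collinear_subset[OF collinear_closed_segment[of P Q]])
      (auto dest: open_closed_segment)
  moreover have "collinear {Q, x, R}"
    using assms(2) by (intro collinear_subset[OF collinear_closed_segment[of Q R]])
      (auto dest: open_closed_segment)
  moreover have "Q \<noteq> x" using assms(2) by (auto simp: open_segment_def)
  ultimately show ?thesis using collinear_3_trans by blast
qed

lemma on_edge_interior_imp_not_interior:
  assumes nc: "\<not> collinear {A, B, C}" and "on_edge_interior A B C x u"
  shows "x \<notin> interior (convex hull {A, B, C}) \<and> u \<noteq> 0"
proof -
  have edge: "x \<notin> interior (convex hull {P, Q, R}) \<and> Q - P \<noteq> 0"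
    if "{P, Q, R} = {A, B, C}" "x \<in> open_segment P Q" for P Q R
    using closed_segment_disjoint_interior_triangle[of P Q R x] that nc
    by (auto dest: open_closed_segment)
  have "{B, C, A} = {A, B, C}" "{C, A, B} = {A, B, C}" by auto
  thus ?thesis using assms(2) edge[of A B C] edge[of B C A] edge[of C A B]
    unfolding on_edge_interior_def by auto
qed

lemma on_edge_interior_unique:
  assumes nc: "\<not> collinear {A, B, C}"
    and "on_edge_interior A B C x u" "on_edge_interior A B C x u'"
  shows "u = u'"
proof -
  have "\<not> (x \<in> open_segment P Q \<and> x \<in> open_segment Q R)"
    if "{P, Q, R} = {A, B, C}" for P Q R
    using open_segments_meet_imp_collinear[of x P Q R] nc that by auto
  moreover have "{B, C, A} = {A, B, C}" "{C, A, B} = {A, B, C}" by auto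
  ultimately show ?thesis
    using assms(2,3) unfolding on_edge_interior_def by (metis open_segment_commute)
qed

lemma on_edge_interior_sgn_sq_power:
  fixes A B C :: complex and a b :: int
  assumes nc: "\<not> collinear {A, B, C}" and "n > 0"
    and angle_A: "vertex_angle B A C = of_int a * pi / real n"
    and angle_B: "vertex_angle A B C = of_int b * pi / real n"
    and "on_edge_interior A B C x u"
  shows "((sgn u)\<^sup>2) ^ n = ((sgn (B - A))\<^sup>2) ^ n"
proof -
  note distinct = not_collinear_imp_distinct[OF nc]
  have "(sgn (- z))\<^sup>2 = (sgn z)\<^sup>2" for z :: complex by (simp add: sgn_minus)
  hence "((sgn (A - C))\<^sup>2) ^ n = ((sgn (C - A))\<^sup>2) ^ n" "((sgn (A - B))\<^sup>2) ^ n = ((sgn (B - A))\<^sup>2) ^ n"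
    by (metis minus_diff_eq)+
  moreover have "((sgn (C - A))\<^sup>2) ^ n = ((sgn (B - A))\<^sup>2) ^ n"
    using sgn_sq_power_eq_if_vertex_angle_multiple[OF _ _ \<open>n > 0\<close> angle_A] distinct by simp
  moreover have "((sgn (C - B))\<^sup>2) ^ n = ((sgn (A - B))\<^sup>2) ^ n"
    using sgn_sq_power_eq_if_vertex_angle_multiple[OF _ _ \<open>n > 0\<close> angle_B] distinct by simp
  ultimately show ?thesis using assms(5) unfolding on_edge_interior_def by auto
qed

lemma sgn_ray_from_vertex_in_sector:
  fixes A B C x :: complex and s c :: real
  assumes nc: "\<not> collinear {A, B, C}" and "x \<noteq> A"
    and "open_segment A x \<subseteq> interior (convex hull {A, B, C})"
    and sector: "sgn (C - A) * cnj (sgn (B - A)) = cis (s * c)" "s = 1 \<or> s = -1" "0 < c" "c < pi"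
  shows "\<exists>\<theta>. 0 < \<theta> \<and> \<theta> < c \<and> sgn (x - A) * cnj (sgn (B - A)) = cis (s * \<theta>)"
proof -
  have "B \<noteq> A" "C \<noteq> A" using not_collinear_imp_distinct[OF nc] by auto
  obtain v w where vw: "0 < v" "0 < w" "x - A = of_real v * (B - A) + of_real w * (C - A)"
    using ray_into_triangle_interior[OF assms(1-3)] by blast
  have "x - A = of_real (v * norm (B - A)) * sgn (B - A) + of_real (w * norm (C - A)) * sgn (C - A)"
    unfolding vw(3) by (simp add: sgn_eq)
  moreover have "\<exists>\<theta>. 0 < \<theta> \<and> \<theta> < c \<and>
      sgn (of_real (v * norm (B - A)) * sgn (B - A) + of_real (w * norm (C - A)) * sgn (C - A))
        * cnj (sgn (B - A)) = cis (s * \<theta>)"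
    by (rule sgn_positive_combination_in_sector[OF _ sector(1,2) _ _ sector(3,4)])
      (use vw(1,2) \<open>B \<noteq> A\<close> \<open>C \<noteq> A\<close> in \<open>simp_all add: norm_sgn\<close>)
  ultimately show ?thesis by simp
qed

locale triangle_billiard_loop =
  fixes A B C :: complex and k :: nat and p :: "nat \<Rightarrow> complex"
  assumes noncollinear: "\<not> collinear {A, B, C}"
    and loop: "billiard_return_A A B C k p"
begin

definition dir :: "nat \<Rightarrow> complex" where
  "dir i = sgn (p (Suc i) - p i)"

lemma start: "p 0 = A" and finish: "p k = A"
  using loop by (simp_all add: billiard_return_A_def)

lemma segment:
  assumes "i < k"
  shows "p (Suc i) \<noteq> p i" "open_segment (p i) (p (Suc i)) \<subseteq> interior (convex hull {A, B, C})"
  using loop assms by (auto simp: billiard_return_A_def)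

lemma reflection:
  assumes "0 < i" "i < k"
  obtains u where "on_edge_interior A B C (p i) u" "dir i = reflect_dir u (dir (i - 1))"
proof -
  have "Suc (i - 1) = i" using assms(1) by simp
  thus ?thesis using loop assms that by (auto simp: billiard_return_A_def dir_def sgn_eq)
qed

lemma length_ge_2: "2 \<le> k"
proof -
  have "1 \<le> k" using loop by (simp add: billiard_return_A_def)
  moreover have "k \<noteq> 1" using segment(1)[of 0] start finish by auto
  ultimately show ?thesis by simp
qed

lemma not_in_interior:
  assumes "i \<le> k"
  shows "p i \<notin> interior (convex hull {A, B, C})"
proof (cases "0 < i \<and> i < k")
  case True
  then obtain u where "on_edge_interior A B C (p i) u" using reflection by blast
  thus ?thesis using on_edge_interior_imp_not_interior[OF noncollinear] by blast
next
  case False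
  hence "p i = A" using assms start finish by (cases "i = 0") auto
  thus ?thesis by (simp add: not_in_interior_convex_hull_3)
qed

lemma reversed_segment:
  assumes "i < k" "j < k" "p i = p (Suc j)" "dir i = - dir j"
  shows "p (Suc i) = p j"
proof (rule ray_exit_unique)
  show "sgn (p (Suc i) - p i) = sgn (p j - p i)"
    using assms(3,4) by (simp add: dir_def flip: sgn_minus)
  show "open_segment (p i) (p (Suc i)) \<subseteq> interior (convex hull {A, B, C})"
    "open_segment (p i) (p j) \<subseteq> interior (convex hull {A, B, C})"
    using segment(2)[OF assms(1)] segment(2)[OF assms(2)] assms(3) by (simp_all add: open_segment_commute)
  show "p (Suc i) \<notin> interior (convex hull {A, B, C})" "p j \<notin> interior (convex hull {A, B, C})"
    using assms(1,2) by (simp_all add: not_in_interior)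
qed (use segment(1)[OF assms(1)] segment(1)[OF assms(2)] assms(3) in auto)

lemma retracing:
  assumes "dir 0 = - dir (k - 1)" "i < k"
  shows "p i = p (k - i) \<and> dir i = - dir (k - 1 - i)"
  using assms(2)
proof (induction i)
  case 0
  thus ?case using assms(1) start finish by simp
next
  case (Suc i)
  define j where "j = k - 1 - i"
  have j: "0 < j" "j < k" "Suc j = k - i" "j - 1 = k - 1 - Suc i" using Suc.prems by (auto simp: j_def)
  have "p i = p (k - i)" "dir i = - dir j" using Suc by (simp_all add: j_def)
  hence IH: "p i = p (Suc j)" "dir i = - dir j" using j(3) by simp_all
  have "p (Suc i) = p j" using reversed_segment[OF _ j(2) IH] Suc.prems by simp
  obtain u where u: "on_edge_interior A B C (p (Suc i)) u" "dir (Suc i) = reflect_dir u (dir i)"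
    using reflection[of "Suc i"] Suc.prems by auto
  obtain u' where u': "on_edge_interior A B C (p j) u'" "dir j = reflect_dir u' (dir (j - 1))"
    using reflection[OF j(1,2)] by auto
  have "u' = u" using on_edge_interior_unique[OF noncollinear u'(1)] u(1) \<open>p (Suc i) = p j\<close> by simp
  moreover have "u \<noteq> 0" using on_edge_interior_imp_not_interior[OF noncollinear u(1)] by simp
  ultimately have "dir (Suc i) = - dir (j - 1)"
    using u(2) u'(2) IH(2) by (simp add: reflect_dir_uminus reflect_dir_involutive)
  thus ?case using \<open>p (Suc i) = p j\<close> j by (simp add: j_def)
qed

lemma retracing_imp_even_length:
  assumes "dir 0 = - dir (k - 1)"
  shows "even k"
proof (rule ccontr)
  assume "odd k"
  then obtain h where h: "k = Suc (2 * h)" by (metis oddE Suc_eq_plus1)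
  hence "p h = p (Suc h)" using retracing[OF assms, of h] by simp
  thus False using segment(1)[of h] h by simp
qed

lemma dir_twisted_power_alternates:
  assumes "norm e = 1" "\<And>x u. on_edge_interior A B C x u \<Longrightarrow> ((sgn u)\<^sup>2) ^ n = (e\<^sup>2) ^ n"
    and "i < k"
  shows "(dir i * cnj e) ^ n = (if even i then (dir 0 * cnj e) ^ n else cnj ((dir 0 * cnj e) ^ n))"
  using assms(3)
proof (induction i)
  case (Suc i)
  obtain u where "on_edge_interior A B C (p (Suc i)) u" "dir (Suc i) = reflect_dir u (dir i)"
    using reflection[of "Suc i"] Suc.prems by auto
  hence "(dir (Suc i) * cnj e) ^ n = cnj ((dir i * cnj e) ^ n)"
    using reflect_dir_twisted_power[OF assms(1,2)] by simp
  thus ?case using Suc by simp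
qed simp

lemma dir_at_A_in_sector:
  assumes "sgn (C - A) * cnj (sgn (B - A)) = cis (s * c)" "s = 1 \<or> s = -1" "0 < c" "c < pi"
  obtains \<theta>0 \<theta>1 where "0 < \<theta>0" "\<theta>0 < c" "dir 0 * cnj (sgn (B - A)) = cis (s * \<theta>0)"
    and "0 < \<theta>1" "\<theta>1 < c" "- dir (k - 1) * cnj (sgn (B - A)) = cis (s * \<theta>1)"
proof -
  have k: "0 < k" "k - 1 < k" "Suc (k - 1) = k" using length_ge_2 by auto
  have "p 1 \<noteq> A" "open_segment A (p 1) \<subseteq> interior (convex hull {A, B, C})"
    using segment[of 0] k start by auto
  moreover have "p (k - 1) \<noteq> A" "open_segment A (p (k - 1)) \<subseteq> interior (convex hull {A, B, C})"
    using segment[of "k - 1"] k finish by (auto simp: open_segment_commute)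
  moreover have "dir 0 = sgn (p 1 - A)" "- dir (k - 1) = sgn (p (k - 1) - A)"
    using k start finish by (simp_all add: dir_def flip: sgn_minus)
  ultimately show ?thesis
    using that sgn_ray_from_vertex_in_sector[OF noncollinear _ _ assms] by metis
qed

lemma false_if_edge_directions_aligned:
  assumes "even n" "1 < n" and s: "s = 1 \<or> s = -1"
    and angle_A: "sgn (C - A) * cnj (sgn (B - A)) = cis (s * (pi / n))"
    and edges: "\<And>x u. on_edge_interior A B C x u \<Longrightarrow> ((sgn u)\<^sup>2) ^ n = ((sgn (B - A))\<^sup>2) ^ n"
  shows False
proof -
  define e where "e = sgn (B - A)"
  have e: "norm e = 1" "cnj e \<noteq> 0"
    using not_collinear_imp_distinct[OF noncollinear] by (auto simp: e_def norm_sgn sgn_zero_iff)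
  have "0 < pi / n" "pi / n < pi" using \<open>1 < n\<close> by (simp_all add: divide_less_eq)
  then obtain \<theta>0 \<theta>1 where \<theta>0: "0 < \<theta>0" "\<theta>0 < pi / n" "dir 0 * cnj e = cis (s * \<theta>0)"
    and \<theta>1: "0 < \<theta>1" "\<theta>1 < pi / n" "- dir (k - 1) * cnj e = cis (s * \<theta>1)"
    using dir_at_A_in_sector[OF angle_A s] unfolding e_def by metis
  have alternate: "(dir (k - 1) * cnj e) ^ n =
      (if even (k - 1) then cis (s * \<theta>0) ^ n else cnj (cis (s * \<theta>0) ^ n))"
    using dir_twisted_power_alternates[OF e(1) edges[folded e_def], where i = "k - 1"] length_ge_2 \<theta>0(3)
    by simp
  have last: "(dir (k - 1) * cnj e) ^ n = cis (s * \<theta>1) ^ n"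
    using \<theta>1(3) \<open>even n\<close> by (metis minus_mult_left power_minus_even)
  note power_in_sector = cis_power_in_sector[OF s \<theta>1(1,2) \<theta>0(1,2)]
  show False
  proof (cases "even (k - 1)")
    case True
    hence "cis (s * \<theta>1) ^ n = cis (s * \<theta>0) ^ n" using alternate last by simp
    hence "\<theta>1 = \<theta>0" by (rule power_in_sector(1))
    hence "dir 0 * cnj e = - dir (k - 1) * cnj e" using \<theta>0(3) \<theta>1(3) by simp
    hence "dir 0 = - dir (k - 1)" using e(2) by (metis mult_cancel_right)
    thus False using retracing_imp_even_length True length_ge_2 by simp
  next
    case False
    hence "cis (s * \<theta>1) ^ n = cnj (cis (s * \<theta>0) ^ n)" using alternate last by simp
    thus False using power_in_sector(2) by contradiction
  qed
qed

end

theorem mainTheorem8: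
  fixes A B C :: complex and n m :: nat
  assumes "\<not> collinear {A, B, C}"
    and "vertex_angle B A C = pi / real n"
    and "vertex_angle A B C = real m * pi / real n"
    and "even n" and "0 < m" and "m + 1 < n"
  shows "\<not> (\<exists>k p. billiard_return_A A B C k p)"
proof
  assume "\<exists>k p. billiard_return_A A B C k p"
  then obtain k p where "billiard_return_A A B C k p" by blast
  then interpret triangle_billiard_loop A B C k p using assms(1) by unfold_locales
  have "sgn (C - A) * cnj (sgn (B - A)) \<in> {cis (1 * (pi / n)), cis (-1 * (pi / n))}"
    using vertex_angle_cis[of B A C] not_collinear_imp_distinct[OF assms(1)] assms(2) by simp
  then obtain s where s: "s = 1 \<or> s = -1"
    and angle_A: "sgn (C - A) * cnj (sgn (B - A)) = cis (s * (pi / n))" by blast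
  have edges: "((sgn u)\<^sup>2) ^ n = ((sgn (B - A))\<^sup>2) ^ n" if "on_edge_interior A B C x u" for x u
    using on_edge_interior_sgn_sq_power[OF assms(1) _ _ _ that, where a = 1 and b = "int m"]
      assms(2,3,6) by simp
  show False
    using false_if_edge_directions_aligned[OF assms(4) _ s angle_A edges] assms(6) by simp
qed

end
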